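(* Let $(M_1,f_1,g_1)$ be an $(m,n)$-hypermodule over a commutative Krasner $(m,n)$-hyperring $(R_1,f'_1,g'_1)$ and $(M_2,f_2,g_2)$ an $(m,n)$-hypermodule over a commutative Krasner $(m,n)$-hyperring $(R_2,f'_2,g'_2)$, both with scalar identity $1$, and consider the $(m,n)$-hypermodule $(M_1\times M_2,f_1\times f_2,g_1\times g_2)$ over $(R_1\times R_2,f'_1\times f'_2,g'_1\times g'_2)$. Let $\phi:\mathcal{SH}(M_1\times M_2)\to\mathcal{SH}(M_1\times M_2)\cup\{\varnothing\}$ be a function. If $Q_1$ is an $n$-ary weakly classical prime subhypermodule of $M_1$ with $\{0\}\times M_2\subseteq\phi(Q_1\times M_2)$, then $Q_1\times M_2$ is an $n$-ary $\phi$-classical prime subhypermodule of $M_1\times M_2$.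
   Context: A commutative Krasner $(m,n)$-hyperring with scalar identity $1$ is a triple $(R,f',g')$ where $(R,f')$ is a canonical $m$-ary hypergroup with zero $0$, $(R,g')$ is a commutative $n$-ary semigroup, $g'$ is distributive over $f'$, $0$ is a zero element for $g'$, and $g'(x,1^{(n-1)})=x$. Notation: $x_i^j$ denotes $x_i,\dots,x_j$ and $x^{(k)}$ denotes $x$ repeated $k$ times. An $(m,n)$-hypermodule over $R$ is a triple $(M,f,g)$ with $(M,f)$ a canonical $m$-ary hypergroup with zero $0$ and $g:R^{n-1}\times M\to P^*(M)$ satisfying: $g(r_1^{n-1},f(x_1^m))=f(g(r_1^{n-1},x_1),\dots,g(r_1^{n-1},x_m))$; $g(r_1^{i-1},f'(s_1^m),r_{i+1}^{n-1},x)=f(g(r_1^{i-1},s_1,r_{i+1}^{n-1},x),\dots,g(r_1^{i-1},s_m,r_{i+1}^{n-1},x))$; $g(r_1^{i-1},g'(r_i^{i+n-1}),r_{i+n}^{2n-2},x)=g(r_1^{n-1},g(r_n^{2n-2},x))$; $g(r_1^{i-1},0,r_{i+1}^{n-1},x)=\{0\}$; moreover $g(1^{(n-1)},a)=\{a\}$. A subhypermodule is a nonempty $N\subseteq M$ with $(N,f)$ an $m$-ary subhypergroup and $g(R^{(n-1)},N)\subseteq N$; $\mathcal{SH}(M)$ is the set of subhypermodules. The product hyperring has componentwise operations, with identity $(1,1)$. On $M_1\times M_2$: $f_1\times f_2((a_1,b_1),\dots,(a_m,b_m))=\{(x_1,x_2):x_1\in f_1(a_1^m),x_2\in f_2(b_1^m)\}$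 and $g_1\times g_2((r_1,s_1),\dots,(r_{n-1},s_{n-1}),(a,b))=\{(y_1,y_2):y_1\in g_1(r_1^{n-1},a),y_2\in g_2(s_1^{n-1},b)\}$. A proper subhypermodule $Q$ of $M$ is $n$-ary weakly classical prime if $0\notin g(r_1^{n-1},a)\subseteq Q$ implies $g(r_i,1^{(n-2)},a)\subseteq Q$ for some $1\le i\le n-1$; given $\phi$ on subhypermodules, $Q$ is $n$-ary $\phi$-classical prime if $g(r_1^{n-1},a)\subseteq Q\setminus\phi(Q)$ implies $g(r_i,1^{(n-2)},a)\subseteq Q$ for some $i$ (applied to $M_1\times M_2$ with its operations and identity $(1,1)$). *)

theory Defs
  imports Main "HOL-Library.Multiset"
begin

text \<open>An m-ary hyperoperation is modelled as a function on argument lists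
  (only lists of length m over the carrier are relevant); an n-ary operation
  likewise with a single value.  Indices are 0-based.\<close>

definition lift_hop :: "('a list \<Rightarrow> 'a set) \<Rightarrow> 'a set list \<Rightarrow> 'a set" where
  "lift_hop f As = \<Union> (f ` listset As)"

definition hyperop :: "'a set \<Rightarrow> nat \<Rightarrow> ('a list \<Rightarrow> 'a set) \<Rightarrow> bool" where
  "hyperop H k f \<longleftrightarrow> (\<forall>xs\<in>lists H. length xs = k \<longrightarrow> f xs \<noteq> {} \<and> f xs \<subseteq> H)"

definition hassoc :: "'a set \<Rightarrow> nat \<Rightarrow> ('a list \<Rightarrow> 'a set) \<Rightarrow> bool" where
  "hassoc H k f \<longleftrightarrow> (\<forall>xs\<in>lists H. length xs = 2*k - 1 \<longrightarrow> (\<forall>i<k.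
     lift_hop f (map (\<lambda>x. {x}) (take i xs) @ [f (take k (drop i xs))] @ map (\<lambda>x. {x}) (drop (i+k) xs))
   = lift_hop f (f (take k xs) # map (\<lambda>x. {x}) (drop k xs))))"

definition hcomm :: "'a set \<Rightarrow> nat \<Rightarrow> ('a list \<Rightarrow> 'b) \<Rightarrow> bool" where
  "hcomm H k f \<longleftrightarrow> (\<forall>xs\<in>lists H. \<forall>ys. length xs = k \<and> mset ys = mset xs \<longrightarrow> f ys = f xs)"

definition hinv :: "'a set \<Rightarrow> nat \<Rightarrow> ('a list \<Rightarrow> 'a set) \<Rightarrow> 'a \<Rightarrow> 'a \<Rightarrow> 'a" where
  "hinv H m f z x = (THE y. y \<in> H \<and> z \<in> f (x # y # replicate (m - 2) z))"

definition canonical_hypergroup :: "'a set \<Rightarrow> nat \<Rightarrow> ('a list \<Rightarrow> 'a set) \<Rightarrow> 'a \<Rightarrow> bool" where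
  "canonical_hypergroup H m f z \<longleftrightarrow>
     hyperop H m f \<and> hassoc H m f \<and> hcomm H m f \<and>
     (\<forall>xs\<in>lists H. length xs = m \<longrightarrow> (\<forall>i<m. (\<Union>y\<in>H. f (xs[i := y])) = H)) \<and>
     z \<in> H \<and> (\<forall>x\<in>H. f (x # replicate (m - 1) z) = {x}) \<and>
     (\<forall>e\<in>H. (\<forall>x\<in>H. f (x # replicate (m - 1) e) = {x}) \<longrightarrow> e = z) \<and>
     (\<forall>x\<in>H. \<exists>!y. y \<in> H \<and> z \<in> f (x # y # replicate (m - 2) z)) \<and>
     (\<forall>xs\<in>lists H. length xs = m \<longrightarrow>
        (\<forall>x\<in>f xs. \<forall>i<m. xs ! i \<in> f ((map (hinv H m f z) xs)[i := x])))"

definition sassoc :: "'a set \<Rightarrow> nat \<Rightarrow> ('a list \<Rightarrow> 'a) \<Rightarrow> bool" where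
  "sassoc H k g \<longleftrightarrow> (\<forall>xs\<in>lists H. length xs = 2*k - 1 \<longrightarrow> (\<forall>i<k.
     g (take i xs @ [g (take k (drop i xs))] @ drop (i+k) xs) = g (g (take k xs) # drop k xs)))"

definition comm_nsemigroup :: "'a set \<Rightarrow> nat \<Rightarrow> ('a list \<Rightarrow> 'a) \<Rightarrow> bool" where
  "comm_nsemigroup H k g \<longleftrightarrow>
     (\<forall>xs\<in>lists H. length xs = k \<longrightarrow> g xs \<in> H) \<and> sassoc H k g \<and> hcomm H k g"

definition krasner_hyperring ::
  "'a set \<Rightarrow> nat \<Rightarrow> nat \<Rightarrow> ('a list \<Rightarrow> 'a set) \<Rightarrow> ('a list \<Rightarrow> 'a) \<Rightarrow> 'a \<Rightarrow> 'a \<Rightarrow> bool" where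
  "krasner_hyperring R m n fR gR z one \<longleftrightarrow>
     canonical_hypergroup R m fR z \<and> comm_nsemigroup R n gR \<and>
     (\<forall>xs\<in>lists R. length xs = n \<longrightarrow> (\<forall>ys\<in>lists R. length ys = m \<longrightarrow> (\<forall>i<n.
        (\<lambda>t. gR (xs[i := t])) ` fR ys = fR (map (\<lambda>y. gR (xs[i := y])) ys)))) \<and>
     (\<forall>xs\<in>lists R. length xs = n \<longrightarrow> (\<forall>i<n. gR (xs[i := z]) = z)) \<and>
     one \<in> R \<and> (\<forall>x\<in>R. gR (x # replicate (n - 1) one) = x)"

definition hypermodule ::
  "'r set \<Rightarrow> nat \<Rightarrow> nat \<Rightarrow> ('r list \<Rightarrow> 'r set) \<Rightarrow> ('r list \<Rightarrow> 'r) \<Rightarrow> 'r \<Rightarrow> 'r \<Rightarrow>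
   'm set \<Rightarrow> ('m list \<Rightarrow> 'm set) \<Rightarrow> ('r list \<Rightarrow> 'm \<Rightarrow> 'm set) \<Rightarrow> 'm \<Rightarrow> bool" where
  "hypermodule R m n fR gR zR oneR M f g zM \<longleftrightarrow>
     canonical_hypergroup M m f zM \<and>
     (\<forall>rs\<in>lists R. length rs = n - 1 \<longrightarrow> (\<forall>x\<in>M. g rs x \<noteq> {} \<and> g rs x \<subseteq> M)) \<and>
     (\<forall>rs\<in>lists R. length rs = n - 1 \<longrightarrow> (\<forall>xs\<in>lists M. length xs = m \<longrightarrow>
        (\<Union>y\<in>f xs. g rs y) = lift_hop f (map (g rs) xs))) \<and>
     (\<forall>rs\<in>lists R. length rs = n - 1 \<longrightarrow> (\<forall>ss\<in>lists R. length ss = m \<longrightarrow>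
        (\<forall>i<n-1. \<forall>x\<in>M. (\<Union>t\<in>fR ss. g (rs[i := t]) x) = lift_hop f (map (\<lambda>s. g (rs[i := s]) x) ss)))) \<and>
     (\<forall>rs\<in>lists R. length rs = 2*n - 2 \<longrightarrow> (\<forall>i<n-1. \<forall>x\<in>M.
        g (take i rs @ [gR (take n (drop i rs))] @ drop (i+n) rs) x
        = (\<Union>y\<in>g (drop (n-1) rs) x. g (take (n-1) rs) y))) \<and>
     (\<forall>rs\<in>lists R. length rs = n - 1 \<longrightarrow> (\<forall>i<n-1. \<forall>x\<in>M. g (rs[i := zR]) x = {zM})) \<and>
     (\<forall>a\<in>M. g (replicate (n - 1) oneR) a = {a})"

definition subhypermodule ::
  "'r set \<Rightarrow> nat \<Rightarrow> nat \<Rightarrow> 'm set \<Rightarrow> ('m list \<Rightarrow> 'm set) \<Rightarrow> ('r list \<Rightarrow> 'm \<Rightarrow> 'm set) \<Rightarrow> 'm set \<Rightarrow> bool" where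
  "subhypermodule R m n M f g N \<longleftrightarrow>
     N \<noteq> {} \<and> N \<subseteq> M \<and>
     (\<forall>xs\<in>lists N. length xs = m \<longrightarrow> f xs \<subseteq> N) \<and>
     (\<forall>xs\<in>lists N. length xs = m \<longrightarrow> (\<forall>i<m. (\<Union>y\<in>N. f (xs[i := y])) = N)) \<and>
     (\<forall>rs\<in>lists R. length rs = n - 1 \<longrightarrow> (\<forall>x\<in>N. g rs x \<subseteq> N))"

definition weakly_classical_prime ::
  "'r set \<Rightarrow> nat \<Rightarrow> nat \<Rightarrow> 'm set \<Rightarrow> ('m list \<Rightarrow> 'm set) \<Rightarrow> ('r list \<Rightarrow> 'm \<Rightarrow> 'm set) \<Rightarrow> 'm \<Rightarrow> 'r \<Rightarrow> 'm set \<Rightarrow> bool" where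
  "weakly_classical_prime R m n M f g zM oneR Q \<longleftrightarrow>
     subhypermodule R m n M f g Q \<and> Q \<noteq> M \<and>
     (\<forall>rs\<in>lists R. length rs = n - 1 \<longrightarrow> (\<forall>a\<in>M.
        zM \<notin> g rs a \<and> g rs a \<subseteq> Q \<longrightarrow> (\<exists>i<n-1. g (rs ! i # replicate (n - 2) oneR) a \<subseteq> Q)))"

definition phi_classical_prime ::
  "'r set \<Rightarrow> nat \<Rightarrow> nat \<Rightarrow> 'm set \<Rightarrow> ('m list \<Rightarrow> 'm set) \<Rightarrow> ('r list \<Rightarrow> 'm \<Rightarrow> 'm set) \<Rightarrow> 'r \<Rightarrow> ('m set \<Rightarrow> 'm set) \<Rightarrow> 'm set \<Rightarrow> bool" where
  "phi_classical_prime R m n M f g oneR \<phi> Q \<longleftrightarrow>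
     subhypermodule R m n M f g Q \<and> Q \<noteq> M \<and>
     (\<forall>rs\<in>lists R. length rs = n - 1 \<longrightarrow> (\<forall>a\<in>M.
        g rs a \<subseteq> Q - \<phi> Q \<longrightarrow> (\<exists>i<n-1. g (rs ! i # replicate (n - 2) oneR) a \<subseteq> Q)))"

definition prod_hop :: "('a list \<Rightarrow> 'a set) \<Rightarrow> ('b list \<Rightarrow> 'b set) \<Rightarrow> ('a \<times> 'b) list \<Rightarrow> ('a \<times> 'b) set" where
  "prod_hop f1 f2 xs = f1 (map fst xs) \<times> f2 (map snd xs)"

definition prod_op :: "('a list \<Rightarrow> 'a) \<Rightarrow> ('b list \<Rightarrow> 'b) \<Rightarrow> ('a \<times> 'b) list \<Rightarrow> 'a \<times> 'b" where
  "prod_op g1 g2 xs = (g1 (map fst xs), g2 (map snd xs))"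

definition prod_smul :: "('r list \<Rightarrow> 'a \<Rightarrow> 'a set) \<Rightarrow> ('s list \<Rightarrow> 'b \<Rightarrow> 'b set) \<Rightarrow>
    ('r \<times> 's) list \<Rightarrow> 'a \<times> 'b \<Rightarrow> ('a \<times> 'b) set" where
  "prod_smul g1 g2 rs x = g1 (map fst rs) (fst x) \<times> g2 (map snd rs) (snd x)"

end

theory Submission
  imports Defs
begin

(* The operations on M1 x M2 act componentwise, so Q1 x M2 is a proper subhypermodule.
   If g(r, a) lies in Q1 x M2 but avoids phi(Q1 x M2), its first component cannot contain 0:
   otherwise (0, b), for any b in the nonempty second component, would lie in
   {0} x M2, which is contained in phi(Q1 x M2). Weak classical primality of Q1 then yields the
   index i, and the second component of g(r_i, 1, ..., 1, a) lies in M2 anyway. *)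

lemma lists_map_fst: "xs \<in> lists (A \<times> B) \<Longrightarrow> map fst xs \<in> lists A"
  and lists_map_snd: "xs \<in> lists (A \<times> B) \<Longrightarrow> map snd xs \<in> lists B"
  by fastforce+

lemma subhypermoduleD:
  assumes "subhypermodule R m n M f g N"
  shows "N \<noteq> {}" and "N \<subseteq> M"
    and "xs \<in> lists N \<Longrightarrow> length xs = m \<Longrightarrow> f xs \<subseteq> N"
    and "xs \<in> lists N \<Longrightarrow> length xs = m \<Longrightarrow> i < m \<Longrightarrow> (\<Union>y\<in>N. f (xs[i := y])) = N"
    and "rs \<in> lists R \<Longrightarrow> length rs = n - 1 \<Longrightarrow> x \<in> N \<Longrightarrow> g rs x \<subseteq> N"
  using assms by (simp_all add: subhypermodule_def)

lemma subhypermodule_Times: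
  assumes N1: "subhypermodule R1 m n M1 f1 g1 N1"
    and N2: "subhypermodule R2 m n M2 f2 g2 N2"
  shows "subhypermodule (R1 \<times> R2) m n (M1 \<times> M2) (prod_hop f1 f2) (prod_smul g1 g2) (N1 \<times> N2)"
  unfolding subhypermodule_def
proof (intro conjI ballI impI allI)
  show "N1 \<times> N2 \<noteq> {}" and "N1 \<times> N2 \<subseteq> M1 \<times> M2"
    using subhypermoduleD(1,2)[OF N1] subhypermoduleD(1,2)[OF N2] by blast+
next
  fix xs
  assume xs: "xs \<in> lists (N1 \<times> N2)" "length xs = m"
  then show "prod_hop f1 f2 xs \<subseteq> N1 \<times> N2"
    using subhypermoduleD(3)[OF N1 lists_map_fst[OF xs(1)]]
      subhypermoduleD(3)[OF N2 lists_map_snd[OF xs(1)]]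
    unfolding prod_hop_def by auto
next
  fix xs i
  assume xs: "xs \<in> lists (N1 \<times> N2)" "length xs = m" and "i < m"
  then have "(\<Union>(y1, y2)\<in>N1 \<times> N2. f1 ((map fst xs)[i := y1]) \<times> f2 ((map snd xs)[i := y2]))
      = N1 \<times> N2"
    using subhypermoduleD(4)[OF N1 lists_map_fst[OF xs(1)]]
      subhypermoduleD(4)[OF N2 lists_map_snd[OF xs(1)]]
    by (simp only: UN_Times_distrib length_map)
  then show "(\<Union>y\<in>N1 \<times> N2. prod_hop f1 f2 (xs[i := y])) = N1 \<times> N2"
    by (simp add: prod_hop_def map_update case_prod_beta)
next
  fix rs x
  assume rs: "rs \<in> lists (R1 \<times> R2)" "length rs = n - 1" and "x \<in> N1 \<times> N2"
  then have "g1 (map fst rs) (fst x) \<subseteq> N1" and "g2 (map snd rs) (snd x) \<subseteq> N2"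
    using subhypermoduleD(5)[OF N1 lists_map_fst[OF rs(1)]]
      subhypermoduleD(5)[OF N2 lists_map_snd[OF rs(1)]]
    by (simp_all add: mem_Times_iff)
  then show "prod_smul g1 g2 rs x \<subseteq> N1 \<times> N2"
    unfolding prod_smul_def by blast
qed

lemma hypermodule_subhypermodule_carrier:
  assumes "hypermodule R m n fR gR zR oneR M f g z"
  shows "subhypermodule R m n M f g M"
proof -
  have M: "canonical_hypergroup M m f z"
    and smul: "\<forall>rs\<in>lists R. length rs = n - 1 \<longrightarrow> (\<forall>x\<in>M. g rs x \<noteq> {} \<and> g rs x \<subseteq> M)"
    using assms by (simp_all add: hypermodule_def)
  have "z \<in> M"
    and "\<forall>xs\<in>lists M. length xs = m \<longrightarrow> f xs \<noteq> {} \<and> f xs \<subseteq> M"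
    and "\<forall>xs\<in>lists M. length xs = m \<longrightarrow> (\<forall>i<m. (\<Union>y\<in>M. f (xs[i := y])) = M)"
    using M by (simp_all add: canonical_hypergroup_def hyperop_def)
  with smul show ?thesis
    unfolding subhypermodule_def by blast
qed

lemma hypermodule_smul_nonempty:
  assumes "hypermodule R m n fR gR zR oneR M f g z"
    and "rs \<in> lists R" and "length rs = n - 1" and "x \<in> M"
  shows "g rs x \<noteq> {}"
  using assms by (simp add: hypermodule_def)

lemma phi_classical_prime_condition_Times_carrier:
  assumes Q1: "weakly_classical_prime R1 m n M1 f1 g1 z1 oneR1 Q1"
    and M2: "hypermodule R2 m n fR2 gR2 zR2 oneR2 M2 f2 g2 z2"
    and "n \<ge> 2" and one2: "oneR2 \<in> R2"
    and \<phi>: "{z1} \<times> M2 \<subseteq> \<phi> (Q1 \<times> M2)"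
    and rs: "rs \<in> lists (R1 \<times> R2)" "length rs = n - 1"
    and a: "a \<in> M1 \<times> M2"
    and ga: "prod_smul g1 g2 rs a \<subseteq> Q1 \<times> M2 - \<phi> (Q1 \<times> M2)"
  shows "\<exists>i<n - 1. prod_smul g1 g2 (rs ! i # replicate (n - 2) (oneR1, oneR2)) a \<subseteq> Q1 \<times> M2"
proof -
  have M2_sub: "subhypermodule R2 m n M2 f2 g2 M2"
    by (rule hypermodule_subhypermodule_carrier[OF M2])
  have a1: "fst a \<in> M1" and a2: "snd a \<in> M2"
    using a by auto
  have "g2 (map snd rs) (snd a) \<noteq> {}"
    using hypermodule_smul_nonempty[OF M2 lists_map_snd[OF rs(1)] _ a2] rs(2) by simp
  moreover have "g2 (map snd rs) (snd a) \<subseteq> M2"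
    using subhypermoduleD(5)[OF M2_sub lists_map_snd[OF rs(1)] _ a2] rs(2) by simp
  ultimately obtain b where b: "b \<in> g2 (map snd rs) (snd a)" and "b \<in> M2"
    by blast
  have in_Q1: "g1 (map fst rs) (fst a) \<subseteq> Q1"
    using ga b unfolding prod_smul_def by blast
  have no_zero: "z1 \<notin> g1 (map fst rs) (fst a)"
  proof
    assume "z1 \<in> g1 (map fst rs) (fst a)"
    then have "(z1, b) \<in> prod_smul g1 g2 rs a"
      using b unfolding prod_smul_def by simp
    moreover have "(z1, b) \<in> \<phi> (Q1 \<times> M2)"
      using \<phi> \<open>b \<in> M2\<close> by blast
    ultimately show False
      using ga by blast
  qed
  obtain i where i: "i < n - 1"
    and Q1_i: "g1 (map fst rs ! i # replicate (n - 2) oneR1) (fst a) \<subseteq> Q1"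
    using Q1 lists_map_fst[OF rs(1)] rs(2) a1 in_Q1 no_zero
    unfolding weakly_classical_prime_def by (metis length_map)
  have "rs ! i \<in> R1 \<times> R2"
    using rs i nth_mem[of i rs] by (simp add: in_lists_conv_set)
  then have "snd (rs ! i) # replicate (n - 2) oneR2 \<in> lists R2"
    using one2 by auto
  then have "g2 (snd (rs ! i) # replicate (n - 2) oneR2) (snd a) \<subseteq> M2"
    using subhypermoduleD(5)[OF M2_sub _ _ a2] \<open>n \<ge> 2\<close> by simp
  with i Q1_i rs(2) show ?thesis
    unfolding prod_smul_def by auto
qed

theorem mainTheorem17:
  fixes R1 :: "'r1 set" and R2 :: "'r2 set" and M1 :: "'m1 set" and M2 :: "'m2 set"
    and m n :: nat
    and fR1 :: "'r1 list \<Rightarrow> 'r1 set" and gR1 :: "'r1 list \<Rightarrow> 'r1"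
    and fR2 :: "'r2 list \<Rightarrow> 'r2 set" and gR2 :: "'r2 list \<Rightarrow> 'r2"
    and f1 :: "'m1 list \<Rightarrow> 'm1 set" and g1 :: "'r1 list \<Rightarrow> 'm1 \<Rightarrow> 'm1 set"
    and f2 :: "'m2 list \<Rightarrow> 'm2 set" and g2 :: "'r2 list \<Rightarrow> 'm2 \<Rightarrow> 'm2 set"
    and zR1 oneR1 :: 'r1 and zR2 oneR2 :: 'r2 and z1 :: 'm1 and z2 :: 'm2
    and \<phi> :: "('m1 \<times> 'm2) set \<Rightarrow> ('m1 \<times> 'm2) set"
    and Q1 :: "'m1 set"
  assumes "m \<ge> 2" and "n \<ge> 2"
    and "krasner_hyperring R1 m n fR1 gR1 zR1 oneR1"
    and "krasner_hyperring R2 m n fR2 gR2 zR2 oneR2"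
    and "hypermodule R1 m n fR1 gR1 zR1 oneR1 M1 f1 g1 z1"
    and "hypermodule R2 m n fR2 gR2 zR2 oneR2 M2 f2 g2 z2"
    and "\<forall>N. subhypermodule (R1 \<times> R2) m n (M1 \<times> M2) (prod_hop f1 f2) (prod_smul g1 g2) N \<longrightarrow>
           \<phi> N = {} \<or> subhypermodule (R1 \<times> R2) m n (M1 \<times> M2) (prod_hop f1 f2) (prod_smul g1 g2) (\<phi> N)"
    and "weakly_classical_prime R1 m n M1 f1 g1 z1 oneR1 Q1"
    and "{z1} \<times> M2 \<subseteq> \<phi> (Q1 \<times> M2)"
  shows "phi_classical_prime (R1 \<times> R2) m n (M1 \<times> M2) (prod_hop f1 f2) (prod_smul g1 g2)
           (oneR1, oneR2) \<phi> (Q1 \<times> M2)"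
proof -
  have Q1: "subhypermodule R1 m n M1 f1 g1 Q1" "Q1 \<noteq> M1"
    using assms(8) by (simp_all add: weakly_classical_prime_def)
  have M2: "subhypermodule R2 m n M2 f2 g2 M2"
    using hypermodule_subhypermodule_carrier[OF assms(6)] .
  have "Q1 \<times> M2 \<noteq> M1 \<times> M2"
    using Q1(2) subhypermoduleD(1)[OF M2] Times_eq_cancel2 by blast
  moreover have "oneR2 \<in> R2"
    using assms(4) by (simp add: krasner_hyperring_def)
  ultimately show ?thesis
    unfolding phi_classical_prime_def
    using subhypermodule_Times[OF Q1(1) M2]
      phi_classical_prime_condition_Times_carrier[where \<phi> = \<phi>,
        OF assms(8) assms(6) assms(2) _ assms(9)]
    by simp
qed

end
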